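(* Let $0<\epsilon\le 1$ and $k\in[K]$. Suppose $\tau_j\ge 0$ independent samples of $(Y,V,pa(V))$ are drawn under arm $j$ for each $j\in[K]$, with $\sum_j\tau_j=\tau$ and $Z_k=\sum_{j\in[K]}\tau_j/M_{kj}>0$. Index all samples by $s\in\{1,\dots,\tau\}$, let $\mathcal{T}_j$ be the indices of samples from arm $j$, and for $s\in\mathcal{T}_j$ let $r_{kj}(s)=\mathrm{P}_k(V_j(s)\mid pa(V)_j(s))/\mathrm{P}_j(V_j(s)\mid pa(V)_j(s))$. Define $$\hat Y_k^{\epsilon}=\frac{1}{Z_k}\sum_{j\in[K]}\sum_{s\in\mathcal{T}_j}\frac{1}{M_{kj}}\,Y_j(s)\,r_{kj}(s)\,\mathbf{1}\big\{r_{kj}(s)\le 2\log(2/\epsilon)M_{kj}\big\}.$$ Then for every $\delta>0$, $$\mathbb{P}\Big(\mu_k-\delta-\tfrac{\epsilon}{2}\le \hat Y_k^{\epsilon}\le \mu_k+\delta\Big)\ge 1-2\exp\Big(-\frac{\delta^2\tau}{8(\log(2/\epsilon))^2}\Big(\frac{Z_k}{\tau}\Big)^2\Big).$$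
   Context: Setting: $\mathcal{G}$ is a causal directed acyclic graph viewed as a Bayesian network. $V$ is a node with parent set $pa(V)$; $V$ and $pa(V)$ take values in finite sets. $Y$ is a node downstream of $V$ with values in $[0,1]$. There are $K$ arms indexed by $[K]=\{0,\dots,K-1\}$: under arm $k$ the conditional law of $V$ given $pa(V)$ is a known conditional distribution $\mathrm{P}_k(V\mid pa(V))$ while all other conditionals (hence the marginal law of $pa(V)$) are unchanged; these conditionals are mutually absolutely continuous. $\mathbb{P}_k,\mathbb{E}_k$ denote probability/expectation under arm $k$, $\mu_k=\mathbb{E}_k[Y]$. A sample from arm $j$ is drawn from the joint law under arm $j$. Logarithms are natural. $D_f(\mathrm{P}_i\Vert\mathrm{P}_j)=\mathbb{E}_j\big[f\big(\mathrm{P}_i(V\mid pa(V))/\mathrm{P}_j(V\mid pa(V))\big)\big]$; $f_1(x)=x\exp(x-1)-1$; $M_{kj}=1+\log(1+D_{f_1}(\mathrm{P}_k\Vert\mathrm{P}_j))$. *)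

theory Defs
  imports "HOL-Probability.Probability"
begin

text \<open>Finite value sets of V and pa(V) are finite types 'v and 'p.
  q is the (arm-independent) marginal law of pa(V); Pc j p is the conditional law
  of V given pa(V)=p under arm j; L p v is the (arm-independent) conditional law of Y
  given (V,pa(V)) = (v,p). \<close>

definition joint :: "'p pmf \<Rightarrow> ('p \<Rightarrow> 'v pmf) \<Rightarrow> ('p \<Rightarrow> 'v \<Rightarrow> real measure)
    \<Rightarrow> (real \<times> 'v \<times> 'p) measure" where
  "joint q Pj L = bind (measure_pmf q) (\<lambda>p. bind (measure_pmf (Pj p)) (\<lambda>v.
      distr (L p v) (borel \<Otimes>\<^sub>M (count_space UNIV \<Otimes>\<^sub>M count_space UNIV)) (\<lambda>y. (y, v, p))))"

definition ratio :: "(nat \<Rightarrow> 'p \<Rightarrow> 'v pmf) \<Rightarrow> nat \<Rightarrow> nat \<Rightarrow> 'p \<Rightarrow> 'v \<Rightarrow> real" where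
  "ratio Pc k j p v = pmf (Pc k p) v / pmf (Pc j p) v"

definition f1 :: "real \<Rightarrow> real" where
  "f1 x = x * exp (x - 1) - 1"

definition Df1 :: "'p pmf \<Rightarrow> (nat \<Rightarrow> 'p \<Rightarrow> 'v pmf) \<Rightarrow> ('p \<Rightarrow> 'v \<Rightarrow> real measure)
    \<Rightarrow> nat \<Rightarrow> nat \<Rightarrow> real" where
  "Df1 q Pc L k j = (\<integral>x. f1 (ratio Pc k j (snd (snd x)) (fst (snd x))) \<partial>(joint q (Pc j) L))"

definition Mkj :: "'p pmf \<Rightarrow> (nat \<Rightarrow> 'p \<Rightarrow> 'v pmf) \<Rightarrow> ('p \<Rightarrow> 'v \<Rightarrow> real measure)
    \<Rightarrow> nat \<Rightarrow> nat \<Rightarrow> real" where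
  "Mkj q Pc L k j = 1 + ln (1 + Df1 q Pc L k j)"

definition mu :: "'p pmf \<Rightarrow> (nat \<Rightarrow> 'p \<Rightarrow> 'v pmf) \<Rightarrow> ('p \<Rightarrow> 'v \<Rightarrow> real measure)
    \<Rightarrow> nat \<Rightarrow> real" where
  "mu q Pc L k = (\<integral>x. fst x \<partial>(joint q (Pc k) L))"

definition sample_space :: "'p pmf \<Rightarrow> (nat \<Rightarrow> 'p \<Rightarrow> 'v pmf) \<Rightarrow> ('p \<Rightarrow> 'v \<Rightarrow> real measure)
    \<Rightarrow> (nat \<Rightarrow> nat) \<Rightarrow> nat \<Rightarrow> (nat \<Rightarrow> real \<times> 'v \<times> 'p) measure" where
  "sample_space q Pc L arm tau = (\<Pi>\<^sub>M s\<in>{1..tau}. joint q (Pc (arm s)) L)"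

definition Tset :: "(nat \<Rightarrow> nat) \<Rightarrow> nat \<Rightarrow> nat \<Rightarrow> nat set" where
  "Tset arm tau j = {s \<in> {1..tau}. arm s = j}"

definition Zk :: "'p pmf \<Rightarrow> (nat \<Rightarrow> 'p \<Rightarrow> 'v pmf) \<Rightarrow> ('p \<Rightarrow> 'v \<Rightarrow> real measure)
    \<Rightarrow> nat \<Rightarrow> (nat \<Rightarrow> nat) \<Rightarrow> nat \<Rightarrow> nat \<Rightarrow> real" where
  "Zk q Pc L K arm tau k = (\<Sum>j<K. real (card (Tset arm tau j)) / Mkj q Pc L k j)"

definition Yhat :: "'p pmf \<Rightarrow> (nat \<Rightarrow> 'p \<Rightarrow> 'v pmf) \<Rightarrow> ('p \<Rightarrow> 'v \<Rightarrow> real measure)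
    \<Rightarrow> nat \<Rightarrow> (nat \<Rightarrow> nat) \<Rightarrow> nat \<Rightarrow> real \<Rightarrow> nat \<Rightarrow> (nat \<Rightarrow> real \<times> 'v \<times> 'p) \<Rightarrow> real" where
  "Yhat q Pc L K arm tau \<epsilon> k \<omega> =
     (1 / Zk q Pc L K arm tau k) *
     (\<Sum>j<K. \<Sum>s\<in>Tset arm tau j.
        let r = ratio Pc k j (snd (snd (\<omega> s))) (fst (snd (\<omega> s)))
        in (1 / Mkj q Pc L k j) * fst (\<omega> s) * r *
           (if r \<le> 2 * ln (2 / \<epsilon>) * Mkj q Pc L k j then 1 else 0))"

end

theory Submission
  imports Defs
begin

text \<open>
  Sample \<open>s\<close> drawn from arm \<open>j\<close> contributes the term \<open>Y r 1{r \<le> c} / (Z\<^sub>k M\<^sub>k\<^sub>j)\<close>, where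
  \<open>r\<close> is the importance ratio and \<open>c = 2 log(2/\<epsilon>) M\<^sub>k\<^sub>j\<close>. These terms are independent and lie
  in \<open>[0, 2 log(2/\<epsilon>) / Z\<^sub>k]\<close>, so Hoeffding's inequality concentrates the estimator around its
  mean. As the weights \<open>1/(Z\<^sub>k M\<^sub>k\<^sub>j)\<close> sum to one, the mean averages the clipped means
  \<open>E\<^sub>j[Y r 1{r \<le> c}] = E\<^sub>k[Y 1{r \<le> c}]\<close>; each is at most \<open>\<mu>\<^sub>k\<close> and falls short of it by at
  most the tail mass \<open>w = E\<^sub>j[r 1{r > c}]\<close>. The analytic core is \<open>w \<le> \<epsilon>/2\<close>: with
  \<open>S = E\<^sub>j[r e^(r-1)] = 1 + D\<^sub>f\<^sub>1\<close>, so that \<open>M\<^sub>k\<^sub>j = 1 + log S\<close>, the tangent lines of the convex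
  function \<open>x e^(x-1)\<close> give \<open>S \<ge> w (2/\<epsilon>)\<^sup>2/e \<cdot> S^(2 log(2/\<epsilon>)) + (1 - w) e^(-w)\<close>,
  which is impossible for \<open>w > \<epsilon>/2\<close>.
\<close>

section \<open>Inequalities for \<open>x e^(x-1)\<close>\<close>

lemma tangent_le_mult_exp:
  fixes x x0 :: real
  assumes "0 \<le> x"
  shows "exp (x0 - 1) * ((1 + x0) * x - x0\<^sup>2) \<le> x * exp (x - 1)"
proof -
  have "exp (x0 - 1) * (1 + (x - x0)) \<le> exp (x0 - 1) * exp (x - x0)"
    by (intro mult_left_mono exp_ge_add_one_self) simp
  also have "\<dots> = exp (x - 1)"
    by (simp flip: exp_add)
  finally have "x * (exp (x0 - 1) * (1 + (x - x0))) \<le> x * exp (x - 1)"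
    using assms by (intro mult_left_mono)
  moreover have "(1 + x0) * x - x0\<^sup>2 \<le> x * (1 + (x - x0))"
    using zero_le_power2[of "x - x0"] by (simp add: power2_eq_square algebra_simps)
  then have "exp (x0 - 1) * ((1 + x0) * x - x0\<^sup>2) \<le> x * (exp (x0 - 1) * (1 + (x - x0)))"
    by (simp add: mult.left_commute)
  ultimately show ?thesis
    by linarith
qed

lemma sum_tangent_le_sum_mult_exp:
  fixes a r :: "'i \<Rightarrow> real" and x0 :: real
  assumes "\<And>i. i \<in> A \<Longrightarrow> 0 \<le> a i" and "\<And>i. i \<in> A \<Longrightarrow> 0 \<le> r i"
  shows "exp (x0 - 1) * ((1 + x0) * (\<Sum>i\<in>A. a i * r i) - x0\<^sup>2 * (\<Sum>i\<in>A. a i))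
           \<le> (\<Sum>i\<in>A. a i * (r i * exp (r i - 1)))"
proof -
  have "exp (x0 - 1) * ((1 + x0) * (\<Sum>i\<in>A. a i * r i) - x0\<^sup>2 * (\<Sum>i\<in>A. a i))
      = (\<Sum>i\<in>A. a i * (exp (x0 - 1) * ((1 + x0) * r i - x0\<^sup>2)))"
    by (simp add: sum_subtractf sum_distrib_left sum_distrib_right algebra_simps)
  also have "\<dots> \<le> (\<Sum>i\<in>A. a i * (r i * exp (r i - 1)))"
    using assms tangent_le_mult_exp by (intro sum_mono mult_left_mono) auto
  finally show ?thesis .
qed

lemma one_le_sum_mult_exp:
  fixes a r :: "'i \<Rightarrow> real"
  assumes "\<And>i. i \<in> A \<Longrightarrow> 0 \<le> a i" and "\<And>i. i \<in> A \<Longrightarrow> 0 \<le> r i"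
    and "(\<Sum>i\<in>A. a i) = 1" and "(\<Sum>i\<in>A. a i * r i) = 1"
  shows "1 \<le> (\<Sum>i\<in>A. a i * (r i * exp (r i - 1)))"
  using sum_tangent_le_sum_mult_exp[of A a r 1] assms by simp

lemma exp_lt_mult_exp_add:
  fixes u b A c :: real
  assumes "0 \<le> u" "1 < b" "0 < A" "1 \<le> A * b" "0 \<le> c" "1 < A + c"
  shows "exp u < A * exp (b * u) + c"
proof -
  define D where "D = A - 1 + A * (b - 1) * u"
  have "exp u * (1 + (b - 1) * u) \<le> exp u * exp ((b - 1) * u)"
    by (intro mult_left_mono exp_ge_add_one_self) simp
  also have "\<dots> = exp (b * u)"
    by (simp flip: exp_add add: algebra_simps)
  finally have "A * (exp u * (1 + (b - 1) * u)) \<le> A * exp (b * u)"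
    using assms(3) by (intro mult_left_mono) auto
  then have lower: "exp u + exp u * D \<le> A * exp (b * u)"
    by (simp add: D_def algebra_simps)
  show ?thesis
  proof (cases "0 \<le> D")
    case True
    have "0 < exp u * D + c"
    proof (cases "c = 0")
      case True
      then have "0 < D"
        using assms by (simp add: D_def add_pos_nonneg)
      then show ?thesis
        using \<open>c = 0\<close> by simp
    next
      case False
      then show ?thesis
        using \<open>0 \<le> D\<close> assms(5) by (simp add: add_nonneg_pos)
    qed
    with lower show ?thesis
      by linarith
  next
    case False
    have "(1 - A) * u \<le> A * (b - 1) * u"
      using assms by (intro mult_right_mono) (auto simp: algebra_simps)
    then have "(A - 1) * (1 - u) \<le> D"
      by (simp add: D_def algebra_simps)
    then have "exp u * ((A - 1) * (1 - u)) \<le> exp u * D"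
      by (intro mult_left_mono) simp_all
    moreover have "0 \<le> A * (b - 1) * u"
      using assms by simp
    then have "A - 1 < 0"
      using False by (simp add: D_def)
    moreover have "exp u * (1 - u) \<le> 1"
      using mult_left_mono[OF exp_ge_add_one_self[of "- u"], of "exp u"]
      by (simp add: exp_minus field_simps)
    then have "(A - 1) * 1 \<le> (A - 1) * (exp u * (1 - u))"
      using \<open>A - 1 < 0\<close> by (intro mult_left_mono_neg) auto
    ultimately have "A - 1 \<le> exp u * D"
      by (simp add: algebra_simps)
    with lower assms(6) show ?thesis
      by linarith
  qed
qed

lemma ln_2_ge_56_81: "56/81 \<le> ln (2::real)"
  using ln_approx_bounds[of 2 2] by (simp add: eval_nat_numeral)

lemma exp_neg_half_ge: "3/5 \<le> exp (- 1/2 :: real)"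
proof -
  have "(exp (1/2 :: real))\<^sup>2 = exp 1"
    by (simp add: power2_eq_square flip: exp_add)
  also have "\<dots> \<le> (5/3)\<^sup>2"
    using e_less_272 by (simp add: power2_eq_square)
  finally have "exp (1/2 :: real) \<le> 5/3"
    by (rule power2_le_imp_le) simp
  then show ?thesis
    by (simp add: exp_minus field_simps)
qed

text \<open>In the application \<open>z = 2/\<epsilon>\<close> and \<open>w\<close> is the clipped tail mass; the two bounds below are
  the hypotheses \<open>1 \<le> A b\<close> and \<open>1 < A + c\<close> of \<open>exp_lt_mult_exp_add\<close> for \<open>A = w z\<^sup>2 / e\<close>.\<close>

context
  fixes z w :: real
  assumes z: "2 \<le> z" and w: "1 / z < w"
begin

lemma one_le_truncation_slope: "1 \<le> w * z\<^sup>2 / exp 1 * (2 * ln z)"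
proof -
  have "ln 2 \<le> ln z"
    using z by simp
  then have ln_z: "56/81 \<le> ln z"
    using ln_2_ge_56_81 by linarith
  then have "2 * 2 * (56/81) \<le> 2 * z * ln z"
    using z by (intro mult_mono) auto
  also have "\<dots> \<le> 2 * (w * z\<^sup>2) * ln z"
    using w z ln_z mult_strict_right_mono[of 1 "w * z" z]
    by (intro mult_right_mono) (auto simp: field_simps power2_eq_square)
  finally show ?thesis
    using e_less_272 by (simp add: field_simps)
qed

lemma one_lt_truncation_mass:
  assumes "w \<le> 1"
  shows "1 < w * z\<^sup>2 / exp 1 + (1 - w) * exp (- w)"
proof (cases "1/2 \<le> w")
  case True
  have "4 * w \<le> z\<^sup>2 * w"
    using z True power_mono[of 2 z 2] by (intro mult_right_mono) auto
  then have slope: "25/17 * w \<le> w * z\<^sup>2 / exp 1"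
    using e_less_272 True by (simp add: field_simps)
  have "3/5 * (3/2 - w) \<le> exp (- 1/2) * (1 - (w - 1/2))"
    using exp_neg_half_ge True assms by (intro mult_mono) auto
  also have "\<dots> \<le> exp (- 1/2) * exp (- (w - 1/2))"
    using exp_ge_add_one_self[of "- (w - 1/2)"] by (intro mult_left_mono) auto
  also have "\<dots> = exp (- w)"
    by (simp flip: exp_add)
  finally have "(1 - w) * (3/5 * (3/2 - w)) \<le> (1 - w) * exp (- w)"
    using assms by (intro mult_left_mono) auto
  moreover have "(1 - w) * (3/5 * (3/2 - w)) = 9/10 - 3/2 * w + 3/5 * (w * w)"
    by (simp add: field_simps)
  moreover have "w / 2 \<le> w * w"
    using True by (simp add: algebra_simps)
  ultimately show ?thesis
    using slope True by linarith
next
  case False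
  have "0 < 1 / z"
    using z by simp
  then have "0 < w"
    using w by linarith
  have "(1 / w)\<^sup>2 < z\<^sup>2"
    using w \<open>0 < w\<close> z by (intro power_strict_mono) (auto simp: field_simps)
  then have "1 / w < w * z\<^sup>2"
    using \<open>0 < w\<close> by (simp add: field_simps power2_eq_square)
  moreover have "2 \<le> 1 / w"
    using False \<open>0 < w\<close> by (simp add: field_simps)
  ultimately have "2 / (272/100) \<le> w * z\<^sup>2 / exp 1"
    using e_less_272 by (intro frac_le) auto
  then have "25/34 \<le> w * z\<^sup>2 / exp 1"
    by simp
  moreover have "1/2 * (3/5) \<le> (1 - w) * exp (- w)"
    using False exp_neg_half_ge order_trans[OF exp_neg_half_ge, of "exp (- w)"]
    by (intro mult_mono) auto
  ultimately show ?thesis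
    by linarith
qed

end

lemma sum_mult_exp_ge_threshold:
  fixes a r :: "'i \<Rightarrow> real"
  assumes "\<And>i. i \<in> B \<Longrightarrow> 0 \<le> a i" and "\<And>i. i \<in> B \<Longrightarrow> t \<le> r i" and "\<And>i. i \<in> B \<Longrightarrow> 0 \<le> r i"
  shows "(\<Sum>i\<in>B. a i * r i) * exp (t - 1) \<le> (\<Sum>i\<in>B. a i * (r i * exp (r i - 1)))"
  unfolding sum_distrib_right
  using assms by (intro sum_mono) (auto simp: mult.assoc intro!: mult_left_mono)

lemma sum_mult_exp_ge_mass:
  fixes a r :: "'i \<Rightarrow> real" and w :: real
  assumes "\<And>i. i \<in> B \<Longrightarrow> 0 \<le> a i" and "\<And>i. i \<in> B \<Longrightarrow> 0 \<le> r i"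
    and "(\<Sum>i\<in>B. a i) \<le> 1" and "(\<Sum>i\<in>B. a i * r i) = 1 - w"
  shows "(1 - w) * exp (- w) \<le> (\<Sum>i\<in>B. a i * (r i * exp (r i - 1)))"
proof -
  have "(2 - w) * (1 - w) - (1 - w)\<^sup>2 * (\<Sum>i\<in>B. a i) = (1 - w) + (1 - w)\<^sup>2 * (1 - (\<Sum>i\<in>B. a i))"
    by (simp add: power2_eq_square algebra_simps)
  with assms(3) have "exp (- w) * (1 - w) \<le> exp (- w) * ((2 - w) * (1 - w) - (1 - w)\<^sup>2 * (\<Sum>i\<in>B. a i))"
    by (intro mult_left_mono) auto
  also have "\<dots> \<le> (\<Sum>i\<in>B. a i * (r i * exp (r i - 1)))"
    using sum_tangent_le_sum_mult_exp[of B a r "1 - w"] assms by simp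
  finally show ?thesis
    by (simp add: mult.commute)
qed

lemma truncated_tail_mass_le:
  fixes a r :: "'i \<Rightarrow> real" and z :: real
  assumes "finite A" and a: "\<And>i. i \<in> A \<Longrightarrow> 0 \<le> a i" and r: "\<And>i. i \<in> A \<Longrightarrow> 0 \<le> r i"
    and sum_a: "(\<Sum>i\<in>A. a i) = 1" and sum_ar: "(\<Sum>i\<in>A. a i * r i) = 1" and z: "2 \<le> z"
  shows "(\<Sum>i\<in>{i\<in>A. 2 * ln z * (1 + ln (\<Sum>i\<in>A. a i * (r i * exp (r i - 1)))) < r i}. a i * r i)
           \<le> 1 / z"
proof (rule ccontr)
  define S where "S = (\<Sum>i\<in>A. a i * (r i * exp (r i - 1)))"
  define b where "b = 2 * ln z"
  define T where "T = {i\<in>A. b * (1 + ln S) < r i}"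
  define w where "w = (\<Sum>i\<in>T. a i * r i)"
  assume "\<not> ?thesis"
  then have w_gt: "1 / z < w"
    by (simp add: w_def T_def b_def S_def)
  have "T \<subseteq> A"
    by (auto simp: T_def)
  have S_ge: "1 \<le> S"
    unfolding S_def using a r sum_a sum_ar by (rule one_le_sum_mult_exp)
  have split: "(\<Sum>i\<in>A. f i) = (\<Sum>i\<in>T. f i) + (\<Sum>i\<in>A - T. f i)" for f :: "'i \<Rightarrow> real"
    using sum.subset_diff[OF \<open>T \<subseteq> A\<close> \<open>finite A\<close>] by (simp add: add.commute)
  have rest_ar: "(\<Sum>i\<in>A - T. a i * r i) = 1 - w"
    using split[of "\<lambda>i. a i * r i"] sum_ar by (simp add: w_def)
  have "0 \<le> (\<Sum>i\<in>A - T. a i * r i)"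
    using a r by (intro sum_nonneg) auto
  then have "w \<le> 1"
    using rest_ar by simp
  have "0 \<le> (\<Sum>i\<in>T. a i)"
    using a \<open>T \<subseteq> A\<close> by (intro sum_nonneg) auto
  then have "(\<Sum>i\<in>A - T. a i) \<le> 1"
    using split[of a] sum_a by simp
  then have rest: "(1 - w) * exp (- w) \<le> (\<Sum>i\<in>A - T. a i * (r i * exp (r i - 1)))"
    using a r rest_ar by (intro sum_mult_exp_ge_mass) auto
  have tail: "w * exp (b * (1 + ln S) - 1) \<le> (\<Sum>i\<in>T. a i * (r i * exp (r i - 1)))"
    unfolding w_def using a r \<open>T \<subseteq> A\<close> by (intro sum_mult_exp_ge_threshold) (auto simp: T_def)
  have "exp b = z\<^sup>2"
    using z by (simp add: b_def exp_double)
  then have "w * z\<^sup>2 / exp 1 * exp (b * ln S) = w * exp (b * (1 + ln S) - 1)"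
    by (simp add: distrib_left exp_diff exp_add)
  moreover have "S = (\<Sum>i\<in>T. a i * (r i * exp (r i - 1))) + (\<Sum>i\<in>A - T. a i * (r i * exp (r i - 1)))"
    unfolding S_def by (rule split)
  ultimately have "w * z\<^sup>2 / exp 1 * exp (b * ln S) + (1 - w) * exp (- w) \<le> exp (ln S)"
    using tail rest S_ge by simp
  moreover have "exp (ln S) < w * z\<^sup>2 / exp 1 * exp (b * ln S) + (1 - w) * exp (- w)"
  proof (rule exp_lt_mult_exp_add)
    have "ln 2 \<le> ln z"
      using z by simp
    then show "1 < b"
      using ln_2_ge_56_81 by (simp add: b_def)
    have "0 < 1 / z"
      using z by simp
    then have "0 < w"
      using w_gt by linarith
    then show "0 < w * z\<^sup>2 / exp 1"
      using z by simp
  qed (use S_ge w_gt z \<open>w \<le> 1\<close> one_le_truncation_slope one_lt_truncation_mass in \<open>auto simp: b_def\<close>)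
  ultimately show False
    by linarith
qed

section \<open>The joint law of \<open>(Y, V, pa(V))\<close>\<close>

abbreviation observation_space :: "(real \<times> 'v \<times> 'p) measure" where
  "observation_space \<equiv> borel \<Otimes>\<^sub>M (count_space UNIV \<Otimes>\<^sub>M count_space UNIV)"

definition joint_pmf :: "'p pmf \<Rightarrow> ('p \<Rightarrow> 'v pmf) \<Rightarrow> 'p \<times> 'v \<Rightarrow> real" where
  "joint_pmf q Pj x = pmf q (fst x) * pmf (Pj (fst x)) (snd x)"

lemma joint_pmf_nonneg: "0 \<le> joint_pmf q Pj x"
  by (simp add: joint_pmf_def)

lemma sum_joint_pmf: "(\<Sum>x\<in>UNIV. joint_pmf q Pj x) = 1"
  for q :: "'p::finite pmf" and Pj :: "'p \<Rightarrow> 'v::finite pmf"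
  by (simp add: joint_pmf_def sum.cartesian_product' case_prod_beta sum_pmf_eq_1
        flip: UNIV_Times_UNIV sum_distrib_left)

lemma ratio_nonneg: "0 \<le> ratio Pc k j p v"
  by (simp add: ratio_def)

lemma joint_pmf_mult_ratio:
  assumes "fst x \<in> set_pmf q \<Longrightarrow> set_pmf (Pc j (fst x)) = set_pmf (Pc k (fst x))"
  shows "joint_pmf q (Pc j) x * ratio Pc k j (fst x) (snd x) = joint_pmf q (Pc k) x"
proof (cases "pmf q (fst x) = 0 \<or> pmf (Pc j (fst x)) (snd x) = 0")
  case True
  then have "pmf q (fst x) = 0 \<or> pmf (Pc k (fst x)) (snd x) = 0"
    using assms by (metis set_pmf_iff)
  with True show ?thesis
    by (auto simp: joint_pmf_def ratio_def)
qed (simp add: joint_pmf_def ratio_def)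

text \<open>Truncating to the unit interval makes the integrand bounded; under the range assumption
  on \<open>L\<close> this is the conditional mean of \<open>Y\<close> given \<open>pa(V)\<close> and \<open>V\<close>.\<close>
definition cond_mean :: "('p \<Rightarrow> 'v \<Rightarrow> real measure) \<Rightarrow> 'p \<times> 'v \<Rightarrow> real" where
  "cond_mean L x = (\<integral>y. max 0 (min 1 y) \<partial>L (fst x) (snd x))"

lemma measurable_parents_value:
  fixes G :: "'p::finite \<Rightarrow> 'v::finite \<Rightarrow> real"
  shows "(\<lambda>x. G (snd (snd x)) (fst (snd x))) \<in> borel_measurable (observation_space :: (real \<times> 'v \<times> 'p) measure)"
proof -
  have "(\<lambda>x. G (snd x) (fst x)) \<in> borel_measurable (count_space (UNIV::'v set) \<Otimes>\<^sub>M count_space (UNIV :: 'p set))"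
    by (subst pair_measure_countable) (auto intro: countable_finite)
  then show ?thesis by measurable
qed

lemma abs_le_sum_abs_pairs:
  fixes G :: "'p::finite \<Rightarrow> 'v::finite \<Rightarrow> real"
  shows "\<bar>G p v\<bar> \<le> (\<Sum>x\<in>UNIV. \<bar>G (fst x) (snd x)\<bar>)"
  using member_le_sum[of "(p, v)" UNIV "\<lambda>x. \<bar>G (fst x) (snd x)\<bar>"] by simp

definition clipped_ratio :: "'p pmf \<Rightarrow> (nat \<Rightarrow> 'p \<Rightarrow> 'v pmf) \<Rightarrow> ('p \<Rightarrow> 'v \<Rightarrow> real measure)
    \<Rightarrow> real \<Rightarrow> nat \<Rightarrow> nat \<Rightarrow> 'p \<Rightarrow> 'v \<Rightarrow> real" where
  "clipped_ratio q Pc L \<epsilon> k j p v =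
     (let r = ratio Pc k j p v in r * (if r \<le> 2 * ln (2 / \<epsilon>) * Mkj q Pc L k j then 1 else 0))"

locale bounded_outcome_kernel =
  fixes L :: "'p::finite \<Rightarrow> 'v::finite \<Rightarrow> real measure"
  assumes L_prob: "\<And>p v. prob_space (L p v)"
    and L_sets: "\<And>p v. sets (L p v) = sets borel"
    and L_range: "\<And>p v. AE y in L p v. 0 \<le> y \<and> y \<le> 1"
begin

lemma measurable_observation:
  "(\<lambda>y. (y, v, p)) \<in> L p v \<rightarrow>\<^sub>M observation_space"
  by (simp add: measurable_cong_sets[OF L_sets refl])

lemma observation_kernel_prob_algebra:
  "(\<lambda>v. distr (L p v) observation_space (\<lambda>y. (y, v, p))) \<in> M \<rightarrow>\<^sub>M prob_algebra observation_space"
  if "sets M = sets (count_space UNIV)"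
  using measurable_observation L_prob that
  by (auto simp: space_prob_algebra measurable_cong_sets[OF that refl]
           intro!: prob_space.prob_space_distr)

lemma parent_kernel_prob_algebra:
  "(\<lambda>p. measure_pmf (Pj p) \<bind> (\<lambda>v. distr (L p v) observation_space (\<lambda>y. (y, v, p))))
     \<in> M \<rightarrow>\<^sub>M prob_algebra observation_space"
  if "sets M = sets (count_space UNIV)"
proof -
  have pmf: "measure_pmf P \<in> space (prob_algebra (count_space UNIV))" for P :: "'v pmf"
    by (simp add: space_prob_algebra measure_pmf.prob_space_axioms)
  have "measure_pmf (Pj p) \<bind> (\<lambda>v. distr (L p v) observation_space (\<lambda>y. (y, v, p)))
          \<in> space (prob_algebra observation_space)" for p
    using prob_space_bind'[OF pmf observation_kernel_prob_algebra]
      sets_bind'[OF pmf observation_kernel_prob_algebra]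
    by (simp add: space_prob_algebra)
  then show ?thesis
    by (simp add: measurable_cong_sets[OF that refl])
qed

lemma prob_space_joint: "prob_space (joint q Pj L)"
  and sets_joint: "sets (joint q Pj L) = sets observation_space"
proof -
  have pmf: "measure_pmf q \<in> space (prob_algebra (count_space UNIV))"
    by (simp add: space_prob_algebra measure_pmf.prob_space_axioms)
  show "prob_space (joint q Pj L)" "sets (joint q Pj L) = sets observation_space"
    unfolding joint_def
    using prob_space_bind'[OF pmf parent_kernel_prob_algebra]
      sets_bind'[OF pmf parent_kernel_prob_algebra] by auto
qed

lemma integral_joint:
  assumes F: "F \<in> borel_measurable observation_space" and B: "\<And>x. \<bar>F x\<bar> \<le> B"
  shows "(\<integral>x. F x \<partial>joint q Pj L) =
     (\<Sum>x\<in>UNIV. joint_pmf q Pj x * (\<integral>y. F (y, snd x, fst x) \<partial>L (fst x) (snd x)))"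
proof -
  let ?inner = "\<lambda>p v. distr (L p v) observation_space (\<lambda>y. (y, v, p))"
  have outer_prob: "prob_space (measure_pmf (Pj p) \<bind> ?inner p)" for p
    using measurable_space[OF parent_kernel_prob_algebra[of "measure_pmf q" Pj], of p]
    by (simp add: space_prob_algebra)
  have inner_prob: "prob_space (?inner p v)" for p v
    by (intro prob_space.prob_space_distr L_prob measurable_observation)
  have "(\<integral>x. F x \<partial>joint q Pj L) =
      (\<integral>p. (\<integral>x. F x \<partial>(measure_pmf (Pj p) \<bind> ?inner p)) \<partial>measure_pmf q)"
    unfolding joint_def
    by (rule integral_bind[OF F B measurable_prob_algebraD[OF parent_kernel_prob_algebra], where B'=1])
       (auto intro!: measure_pmf.finite_measure_axioms AE_I2 simp: prob_space.emeasure_le_1[OF outer_prob])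
  also have "\<dots> = (\<integral>p. (\<integral>v. (\<integral>x. F x \<partial>?inner p v) \<partial>measure_pmf (Pj p)) \<partial>measure_pmf q)"
    by (intro Bochner_Integration.integral_cong refl integral_bind[OF F B
          measurable_prob_algebraD[OF observation_kernel_prob_algebra], where B'=1])
       (auto intro!: measure_pmf.finite_measure_axioms AE_I2 simp: prob_space.emeasure_le_1[OF inner_prob])
  also have "\<dots> = (\<integral>p. (\<integral>v. (\<integral>y. F (y, v, p) \<partial>L p v) \<partial>measure_pmf (Pj p)) \<partial>measure_pmf q)"
    by (intro Bochner_Integration.integral_cong refl integral_distr measurable_observation F)
  also have "\<dots> = (\<Sum>p\<in>UNIV. \<Sum>v\<in>UNIV. pmf q p * pmf (Pj p) v * (\<integral>y. F (y, v, p) \<partial>L p v))"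
    by (simp add: integral_measure_pmf[where A=UNIV] sum_distrib_left mult.assoc)
  also have "\<dots> = (\<Sum>x\<in>UNIV. joint_pmf q Pj x * (\<integral>y. F (y, snd x, fst x) \<partial>L (fst x) (snd x)))"
    by (simp add: joint_pmf_def sum.cartesian_product' case_prod_beta flip: UNIV_Times_UNIV)
  finally show ?thesis .
qed

lemma AE_joint_fst_unit_interval: "AE x in joint q Pj L. 0 \<le> fst x \<and> fst x \<le> 1"
proof -
  have P: "Measurable.pred observation_space (\<lambda>x. 0 \<le> fst x \<and> fst x \<le> 1)"
    by measurable
  have "AE x in distr (L p v) observation_space (\<lambda>y. (y, v, p)). 0 \<le> fst x \<and> fst x \<le> 1" for p v
    using P L_range by (simp add: AE_distr_iff[OF measurable_observation] pred_def)
  then have "AE x in measure_pmf (Pj p) \<bind> (\<lambda>v. distr (L p v) observation_space (\<lambda>y. (y, v, p))).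
      0 \<le> fst x \<and> fst x \<le> 1" for p
    by (subst AE_bind[OF measurable_prob_algebraD[OF observation_kernel_prob_algebra] P]) simp_all
  then show ?thesis
    unfolding joint_def
    by (subst AE_bind[OF measurable_prob_algebraD[OF parent_kernel_prob_algebra] P]) simp_all
qed

lemma cond_mean_unit_interval: "0 \<le> cond_mean L x" "cond_mean L x \<le> 1"
proof -
  interpret prob_space "L (fst x) (snd x)" by (rule L_prob)
  have "integrable (L (fst x) (snd x)) (\<lambda>y::real. max 0 (min 1 y))"
    by (rule integrable_const_bound[where B=1])
       (auto simp: measurable_cong_sets[OF L_sets refl])
  then show "0 \<le> cond_mean L x" "cond_mean L x \<le> 1"
    unfolding cond_mean_def by (auto intro!: integral_nonneg_AE integral_le_const)
qed

lemma integral_joint_parents_value: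
  "(\<integral>x. G (snd (snd x)) (fst (snd x)) \<partial>joint q Pj L) = (\<Sum>x\<in>UNIV. joint_pmf q Pj x * G (fst x) (snd x))"
  using abs_le_sum_abs_pairs[of G]
  by (subst integral_joint[OF measurable_parents_value]) (auto simp: prob_space.prob_space[OF L_prob])

lemma integral_joint_fst_mult:
  "(\<integral>x. fst x * G (snd (snd x)) (fst (snd x)) \<partial>joint q Pj L) =
     (\<Sum>x\<in>UNIV. joint_pmf q Pj x * (cond_mean L x * G (fst x) (snd x)))"
proof -
  have "(\<integral>x. fst x * G (snd (snd x)) (fst (snd x)) \<partial>joint q Pj L) =
        (\<integral>x. max 0 (min 1 (fst x)) * G (snd (snd x)) (fst (snd x)) \<partial>joint q Pj L)"
    by (rule integral_cong_AE)
       (auto simp: measurable_cong_sets[OF sets_joint refl] intro!: measurable_parents_value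
             intro: eventually_mono[OF AE_joint_fst_unit_interval])
  also have "\<dots> = (\<Sum>x\<in>UNIV. joint_pmf q Pj x * (cond_mean L x * G (fst x) (snd x)))"
  proof (subst integral_joint)
    show "(\<lambda>x. max 0 (min 1 (fst x)) * G (snd (snd x)) (fst (snd x))) \<in> borel_measurable observation_space"
      using measurable_parents_value[of G] by measurable
    show "\<bar>max 0 (min 1 (fst x)) * G (snd (snd x)) (fst (snd x))\<bar> \<le> (\<Sum>x\<in>UNIV. \<bar>G (fst x) (snd x)\<bar>)" for x
      using abs_le_sum_abs_pairs[of G]
      by (simp add: abs_mult mult_le_one order_trans[OF mult_left_le_one_le] abs_le_iff)
  qed (simp add: cond_mean_def)
  finally show ?thesis .
qed

lemma joint_pmf_mult_cond_mean_bounds: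
  "0 \<le> joint_pmf q P x * cond_mean L x" "joint_pmf q P x * cond_mean L x \<le> joint_pmf q P x"
  using cond_mean_unit_interval[of x] joint_pmf_nonneg[of q P x] by (auto intro: mult_left_le)

lemma mu_eq_sum: "mu q Pc L k = (\<Sum>x\<in>UNIV. joint_pmf q (Pc k) x * cond_mean L x)"
  using integral_joint_fst_mult[where G = "\<lambda>_ _. 1" and Pj = "Pc k"] by (simp add: mu_def)

lemma Df1_eq_sum:
  "Df1 q Pc L k j = (\<Sum>x\<in>UNIV. joint_pmf q (Pc j) x *
     (ratio Pc k j (fst x) (snd x) * exp (ratio Pc k j (fst x) (snd x) - 1))) - 1"
proof -
  have "Df1 q Pc L k j = (\<Sum>x\<in>UNIV. joint_pmf q (Pc j) x *
     (ratio Pc k j (fst x) (snd x) * exp (ratio Pc k j (fst x) (snd x) - 1) - 1))"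
    unfolding Df1_def by (subst integral_joint_parents_value) (simp add: f1_def)
  then show ?thesis
    by (simp add: algebra_simps sum_subtractf sum_joint_pmf)
qed

context
  fixes q :: "'p pmf" and Pc :: "nat \<Rightarrow> 'p \<Rightarrow> 'v pmf" and j k :: nat
  assumes abs_cont: "\<And>p. p \<in> set_pmf q \<Longrightarrow> set_pmf (Pc j p) = set_pmf (Pc k p)"
begin

abbreviation "r_kj \<equiv> \<lambda>x. ratio Pc k j (fst x) (snd x)"

lemma sum_joint_pmf_mult_ratio: "(\<Sum>x\<in>UNIV. joint_pmf q (Pc j) x * r_kj x) = 1"
  using joint_pmf_mult_ratio[of _ q Pc j k] abs_cont sum_joint_pmf[of q "Pc k"] by simp

lemma one_le_Mkj: "1 \<le> Mkj q Pc L k j"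
  using one_le_sum_mult_exp[of UNIV "joint_pmf q (Pc j)" r_kj] sum_joint_pmf[of q "Pc j"]
    sum_joint_pmf_mult_ratio
  by (simp add: Mkj_def Df1_eq_sum joint_pmf_nonneg ratio_nonneg)

lemma clipped_ratio_div_Mkj_bounds:
  assumes "0 < \<epsilon>" "\<epsilon> \<le> 1" "0 \<le> y" "y \<le> 1"
  shows "y * clipped_ratio q Pc L \<epsilon> k j p v / Mkj q Pc L k j \<in> {0..2 * ln (2 / \<epsilon>)}"
proof -
  have "0 \<le> ln (2 / \<epsilon>)"
    using assms by simp
  then have "0 \<le> clipped_ratio q Pc L \<epsilon> k j p v"
    "clipped_ratio q Pc L \<epsilon> k j p v \<le> 2 * ln (2 / \<epsilon>) * Mkj q Pc L k j"
    using one_le_Mkj ratio_nonneg[of Pc k j p v] by (auto simp: clipped_ratio_def Let_def)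
  then show ?thesis
    using one_le_Mkj assms(3,4) mult_mono[of y 1 "clipped_ratio q Pc L \<epsilon> k j p v"]
    by (auto simp: field_simps)
qed

lemma integral_clipped_ratio_eq_sum:
  "(\<integral>x. fst x * clipped_ratio q Pc L \<epsilon> k j (snd (snd x)) (fst (snd x)) \<partial>joint q (Pc j) L)
     = (\<Sum>x\<in>UNIV. joint_pmf q (Pc k) x * cond_mean L x *
          (if r_kj x \<le> 2 * ln (2 / \<epsilon>) * Mkj q Pc L k j then 1 else 0))"
proof -
  have "(\<integral>x. fst x * clipped_ratio q Pc L \<epsilon> k j (snd (snd x)) (fst (snd x)) \<partial>joint q (Pc j) L)
     = (\<Sum>x\<in>UNIV. joint_pmf q (Pc j) x * r_kj x * cond_mean L x *
          (if r_kj x \<le> 2 * ln (2 / \<epsilon>) * Mkj q Pc L k j then 1 else 0))"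
    by (subst integral_joint_fst_mult) (simp add: clipped_ratio_def Let_def ac_simps)
  then show ?thesis
    using joint_pmf_mult_ratio[of _ q Pc j k] abs_cont by simp
qed

lemma integral_clipped_ratio_le_mu:
  "(\<integral>x. fst x * clipped_ratio q Pc L \<epsilon> k j (snd (snd x)) (fst (snd x)) \<partial>joint q (Pc j) L)
     \<le> mu q Pc L k"
  unfolding integral_clipped_ratio_eq_sum mu_eq_sum
  using joint_pmf_mult_cond_mean_bounds by (intro sum_mono) auto

lemma mu_le_integral_clipped_ratio:
  assumes "0 < \<epsilon>" "\<epsilon> \<le> 1"
  shows "mu q Pc L k - \<epsilon> / 2
     \<le> (\<integral>x. fst x * clipped_ratio q Pc L \<epsilon> k j (snd (snd x)) (fst (snd x)) \<partial>joint q (Pc j) L)"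
proof -
  define c where "c = 2 * ln (2 / \<epsilon>) * Mkj q Pc L k j"
  have "mu q Pc L k - (\<integral>x. fst x * clipped_ratio q Pc L \<epsilon> k j (snd (snd x)) (fst (snd x)) \<partial>joint q (Pc j) L)
      = (\<Sum>x\<in>UNIV. joint_pmf q (Pc k) x * cond_mean L x * (if r_kj x \<le> c then 0 else 1))"
    unfolding integral_clipped_ratio_eq_sum mu_eq_sum c_def sum_subtractf[symmetric]
    by (intro sum.cong) auto
  also have "\<dots> \<le> (\<Sum>x\<in>{x\<in>UNIV. c < r_kj x}. joint_pmf q (Pc k) x)"
    unfolding sum.inter_filter[OF finite]
    using joint_pmf_mult_cond_mean_bounds by (intro sum_mono) auto
  also have "\<dots> = (\<Sum>x\<in>{x\<in>UNIV. c < r_kj x}. joint_pmf q (Pc j) x * r_kj x)"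
    using joint_pmf_mult_ratio[of _ q Pc j k] abs_cont by simp
  also have "\<dots> \<le> 1 / (2 / \<epsilon>)"
    using truncated_tail_mass_le[of UNIV "joint_pmf q (Pc j)" r_kj "2 / \<epsilon>"] assms
      sum_joint_pmf[of q "Pc j"] sum_joint_pmf_mult_ratio
    by (simp add: c_def Mkj_def Df1_eq_sum joint_pmf_nonneg ratio_nonneg field_simps)
  finally show ?thesis
    by simp
qed

end

end

section \<open>Hoeffding's inequality on a product space\<close>

lemma indep_vars_PiM_components:
  assumes "I \<noteq> {}" and M: "\<And>i. prob_space (M i)" and sets_M: "\<And>i. sets (M i) = sets N"
  shows "prob_space.indep_vars (PiM I M) (\<lambda>_. N) (\<lambda>i \<omega>. \<omega> i) I"
proof -
  interpret product_prob_space M I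
    by (intro product_prob_spaceI M)
  have "(\<lambda>\<omega>. \<omega> i) \<in> PiM I M \<rightarrow>\<^sub>M N" if "i \<in> I" for i
    using measurable_component_singleton[OF that, of M] measurable_cong_sets[OF refl sets_M] by blast
  moreover have "distr (PiM I M) (\<Pi>\<^sub>M i\<in>I. N) (\<lambda>x. \<lambda>i\<in>I. x i) = distr (PiM I M) (PiM I M) (\<lambda>x. x)"
    by (intro distr_cong refl sets_PiM_cong sets_M[symmetric])
       (auto simp: space_PiM PiE_def extensional_restrict)
  moreover have "(\<Pi>\<^sub>M i\<in>I. distr (PiM I M) N (\<lambda>x. x i)) = PiM I M"
  proof (rule PiM_cong[OF refl])
    fix i assume "i \<in> I"
    have "distr (PiM I M) N (\<lambda>x. x i) = distr (PiM I M) (M i) (\<lambda>x. x i)"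
      by (intro distr_cong refl sets_M[symmetric])
    also have "\<dots> = M i"
      using \<open>i \<in> I\<close> by (rule PiM_component)
    finally show "distr (PiM I M) N (\<lambda>x. x i) = M i" .
  qed
  ultimately show ?thesis
    using \<open>I \<noteq> {}\<close> by (simp add: indep_vars_iff_distr_eq_PiM' distr_id)
qed

lemma integral_PiM_component:
  fixes g :: "'a \<Rightarrow> real"
  assumes "i \<in> I" and "\<And>i. prob_space (M i)" and "g \<in> borel_measurable (M i)"
  shows "(\<integral>\<omega>. g (\<omega> i) \<partial>PiM I M) = (\<integral>x. g x \<partial>M i)"
proof -
  have "(\<integral>\<omega>. g (\<omega> i) \<partial>PiM I M) = (\<integral>x. g x \<partial>distr (PiM I M) (M i) (\<lambda>\<omega>. \<omega> i))"
    using assms by (intro integral_distr[symmetric] measurable_component_singleton)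
  then show ?thesis
    using assms by (simp add: distr_PiM_component)
qed

lemma Hoeffding_ineq_PiM_components:
  fixes g :: "'i \<Rightarrow> 'a \<Rightarrow> real" and c :: real
  assumes "finite I" "I \<noteq> {}" and M: "\<And>i. prob_space (M i)" and sets_M: "\<And>i. sets (M i) = sets N"
    and g: "\<And>i. i \<in> I \<Longrightarrow> g i \<in> borel_measurable N"
    and range: "\<And>i. i \<in> I \<Longrightarrow> AE x in M i. g i x \<in> {0..c}"
  shows "Hoeffding_ineq (PiM I M) I (\<lambda>i \<omega>. g i (\<omega> i)) (\<lambda>_. 0) (\<lambda>_. c)"
proof -
  interpret P: prob_space "PiM I M"
    by (rule prob_space_PiM) (simp add: M)
  have "P.indep_vars (\<lambda>_. borel) (\<lambda>i \<omega>. g i (\<omega> i)) I"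
    by (rule P.indep_vars_compose2[OF indep_vars_PiM_components[OF \<open>I \<noteq> {}\<close> M sets_M] g])
  moreover have "AE \<omega> in PiM I M. g i (\<omega> i) \<in> {0..c}" if "i \<in> I" for i
    using range[OF that] by (rule AE_PiM_component[OF M that])
  ultimately show ?thesis
    using \<open>finite I\<close> by unfold_locales auto
qed

lemma Hoeffding_PiM_interval:
  fixes g :: "'i \<Rightarrow> 'a \<Rightarrow> real" and c \<delta> lo hi :: real
  assumes "finite I" "I \<noteq> {}" and M: "\<And>i. prob_space (M i)" and sets_M: "\<And>i. sets (M i) = sets N"
    and g: "\<And>i. i \<in> I \<Longrightarrow> g i \<in> borel_measurable N"
    and range: "\<And>i. i \<in> I \<Longrightarrow> AE x in M i. g i x \<in> {0..c}" and "0 < c" "0 < \<delta>"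
    and lo: "lo \<le> (\<Sum>i\<in>I. \<integral>x. g i x \<partial>M i) - \<delta>" and hi: "(\<Sum>i\<in>I. \<integral>x. g i x \<partial>M i) + \<delta> \<le> hi"
  shows "1 - 2 * exp (- 2 * \<delta>\<^sup>2 / (card I * c\<^sup>2))
    \<le> measure (PiM I M) {\<omega> \<in> space (PiM I M). lo \<le> (\<Sum>i\<in>I. g i (\<omega> i)) \<and> (\<Sum>i\<in>I. g i (\<omega> i)) \<le> hi}"
proof -
  define mean where "mean = (\<Sum>i\<in>I. \<integral>x. g i x \<partial>M i)"
  interpret Hoeffding_ineq "PiM I M" I "\<lambda>i \<omega>. g i (\<omega> i)" "\<lambda>_. 0" "\<lambda>_. c" mean
  proof -
    show "Hoeffding_ineq (PiM I M) I (\<lambda>i \<omega>. g i (\<omega> i)) (\<lambda>_. 0) (\<lambda>_. c)"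
      using assms(1-6) by (rule Hoeffding_ineq_PiM_components)
    have "(\<integral>\<omega>. g i (\<omega> i) \<partial>PiM I M) = (\<integral>x. g i x \<partial>M i)" if "i \<in> I" for i
      using that M g[OF that] measurable_cong_sets[OF sets_M refl] by (intro integral_PiM_component) auto
    then show "mean \<equiv> \<Sum>i\<in>I. \<integral>\<omega>. g i (\<omega> i) \<partial>PiM I M"
      by (simp add: mean_def)
  qed
  define B where "B = {\<omega> \<in> space (PiM I M). \<bar>(\<Sum>i\<in>I. g i (\<omega> i)) - mean\<bar> \<ge> \<delta>}"
  have B_prob: "prob B \<le> 2 * exp (- 2 * \<delta>\<^sup>2 / (card I * c\<^sup>2))"
    using Hoeffding_ineq_abs_ge[of \<delta>] \<open>0 < \<delta>\<close> \<open>0 < c\<close> \<open>finite I\<close> \<open>I \<noteq> {}\<close>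
    by (simp add: B_def card_gt_0_iff)
  have [measurable]: "(\<lambda>\<omega>. \<Sum>i\<in>I. g i (\<omega> i)) \<in> borel_measurable (PiM I M)"
    using random_variable by (intro borel_measurable_sum) auto
  have "B \<in> events"
    unfolding B_def by measurable
  have "space (PiM I M) - B
      \<subseteq> {\<omega> \<in> space (PiM I M). lo \<le> (\<Sum>i\<in>I. g i (\<omega> i)) \<and> (\<Sum>i\<in>I. g i (\<omega> i)) \<le> hi}"
    using lo hi by (auto simp: B_def mean_def)
  then have "prob (space (PiM I M) - B)
      \<le> prob {\<omega> \<in> space (PiM I M). lo \<le> (\<Sum>i\<in>I. g i (\<omega> i)) \<and> (\<Sum>i\<in>I. g i (\<omega> i)) \<le> hi}"
    by (intro finite_measure_mono) measurable
  with B_prob prob_compl[OF \<open>B \<in> events\<close>] show ?thesis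
    by linarith
qed

section \<open>The clipped estimator\<close>

lemma sum_Tset_eq_sum_samples:
  assumes "\<And>s. s \<in> {1..tau} \<Longrightarrow> arm s < K"
  shows "(\<Sum>j<K. \<Sum>s\<in>Tset arm tau j. F j s) = (\<Sum>s\<in>{1..tau}. F (arm s) s)"
proof -
  have "(\<Sum>j<K. \<Sum>s\<in>Tset arm tau j. F j s) = (\<Sum>j<K. \<Sum>s\<in>{s\<in>{1..tau}. arm s = j}. F (arm s) s)"
    by (intro sum.cong refl) (auto simp: Tset_def)
  also have "\<dots> = (\<Sum>s\<in>{1..tau}. F (arm s) s)"
    using assms by (intro sum.group) auto
  finally show ?thesis .
qed

locale clipped_estimator = bounded_outcome_kernel L
  for L :: "'p::finite \<Rightarrow> 'v::finite \<Rightarrow> real measure" +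
  fixes q :: "'p pmf" and Pc :: "nat \<Rightarrow> 'p \<Rightarrow> 'v pmf"
    and K k tau :: nat and arm :: "nat \<Rightarrow> nat" and \<epsilon> :: real
  assumes abs_cont: "\<And>i j p. i < K \<Longrightarrow> j < K \<Longrightarrow> p \<in> set_pmf q \<Longrightarrow>
                     set_pmf (Pc i p) = set_pmf (Pc j p)"
    and eps: "0 < \<epsilon>" "\<epsilon> \<le> 1"
    and k: "k < K"
    and arm: "\<And>s. s \<in> {1..tau} \<Longrightarrow> arm s < K"
    and Zpos: "Zk q Pc L K arm tau k > 0"
begin

abbreviation "Z \<equiv> Zk q Pc L K arm tau k"

definition sample_term :: "nat \<Rightarrow> real \<times> 'v \<times> 'p \<Rightarrow> real" where
  "sample_term s x =
     fst x * clipped_ratio q Pc L \<epsilon> k (arm s) (snd (snd x)) (fst (snd x)) / Mkj q Pc L k (arm s) / Z"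

lemma arm_abs_cont:
  assumes "s \<in> {1..tau}"
  shows "p \<in> set_pmf q \<Longrightarrow> set_pmf (Pc (arm s) p) = set_pmf (Pc k p)"
  using abs_cont arm[OF assms] k by blast

lemma Z_eq_sum_samples: "Z = (\<Sum>s\<in>{1..tau}. 1 / Mkj q Pc L k (arm s))"
  using sum_Tset_eq_sum_samples[OF arm, where F = "\<lambda>j s. 1 / Mkj q Pc L k j"]
  by (simp add: Zk_def)

lemma samples_nonempty: "{1..tau} \<noteq> {}"
proof
  assume "{1..tau} = {}"
  with Z_eq_sum_samples Zpos show False
    by (simp del: atLeastAtMost_iff atLeastatMost_empty_iff)
qed

lemma Yhat_eq_sum_sample_term: "Yhat q Pc L K arm tau \<epsilon> k \<omega> = (\<Sum>s\<in>{1..tau}. sample_term s (\<omega> s))"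
  unfolding Yhat_def Let_def sample_term_def
  by (subst sum_Tset_eq_sum_samples[OF arm])
     (auto simp: sum_distrib_left clipped_ratio_def Let_def intro!: sum.cong)

lemma measurable_sample_term: "sample_term s \<in> borel_measurable observation_space"
  unfolding sample_term_def[abs_def]
  using measurable_parents_value[of "clipped_ratio q Pc L \<epsilon> k (arm s)"] by simp

lemma AE_sample_term_range:
  assumes "s \<in> {1..tau}"
  shows "AE x in joint q (Pc (arm s)) L. sample_term s x \<in> {0..2 * ln (2 / \<epsilon>) / Z}"
  using AE_joint_fst_unit_interval
proof (rule eventually_mono)
  fix x :: "real \<times> 'v \<times> 'p"
  assume "0 \<le> fst x \<and> fst x \<le> 1"
  then have "fst x * clipped_ratio q Pc L \<epsilon> k (arm s) (snd (snd x)) (fst (snd x)) / Mkj q Pc L k (arm s)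
      \<in> {0..2 * ln (2 / \<epsilon>)}"
    using clipped_ratio_div_Mkj_bounds[where q = q and Pc = Pc, OF arm_abs_cont[OF assms] eps] by blast
  then show "sample_term s x \<in> {0..2 * ln (2 / \<epsilon>) / Z}"
    unfolding sample_term_def atLeastAtMost_iff using Zpos
    by (auto intro: divide_right_mono simp del: divide_divide_eq_left)
qed

lemma sum_integral_sample_term_bounds:
  "mu q Pc L k - \<epsilon> / 2 \<le> (\<Sum>s\<in>{1..tau}. \<integral>x. sample_term s x \<partial>joint q (Pc (arm s)) L)"
  "(\<Sum>s\<in>{1..tau}. \<integral>x. sample_term s x \<partial>joint q (Pc (arm s)) L) \<le> mu q Pc L k"
proof -
  define E where "E = (\<lambda>s. \<integral>x. fst x * clipped_ratio q Pc L \<epsilon> k (arm s) (snd (snd x)) (fst (snd x))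
                          \<partial>joint q (Pc (arm s)) L)"
  have "(\<Sum>s\<in>{1..tau}. \<integral>x. sample_term s x \<partial>joint q (Pc (arm s)) L)
      = (\<Sum>s\<in>{1..tau}. E s / Mkj q Pc L k (arm s)) / Z"
    by (simp add: sample_term_def E_def sum_divide_distrib)
  moreover have "mu q Pc L k - \<epsilon> / 2 \<le> E s" "E s \<le> mu q Pc L k" "0 \<le> Mkj q Pc L k (arm s)"
    if "s \<in> {1..tau}" for s
    using mu_le_integral_clipped_ratio[where q = q and Pc = Pc, OF arm_abs_cont[OF that] eps]
      integral_clipped_ratio_le_mu[where q = q and Pc = Pc, OF arm_abs_cont[OF that]]
      one_le_Mkj[where q = q and Pc = Pc, OF arm_abs_cont[OF that]]
    by (simp_all add: E_def)
  then have "(mu q Pc L k - \<epsilon> / 2) * Z \<le> (\<Sum>s\<in>{1..tau}. E s / Mkj q Pc L k (arm s))"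
    "(\<Sum>s\<in>{1..tau}. E s / Mkj q Pc L k (arm s)) \<le> mu q Pc L k * Z"
    unfolding Z_eq_sum_samples sum_distrib_left by (auto intro!: sum_mono divide_right_mono)
  ultimately show "mu q Pc L k - \<epsilon> / 2 \<le> (\<Sum>s\<in>{1..tau}. \<integral>x. sample_term s x \<partial>joint q (Pc (arm s)) L)"
    "(\<Sum>s\<in>{1..tau}. \<integral>x. sample_term s x \<partial>joint q (Pc (arm s)) L) \<le> mu q Pc L k"
    using Zpos by (simp_all add: pos_le_divide_eq pos_divide_le_eq)
qed

lemma Yhat_concentration:
  assumes "0 < \<delta>"
  shows "1 - 2 * exp (- 2 * \<delta>\<^sup>2 / (tau * (2 * ln (2 / \<epsilon>) / Z)\<^sup>2))
    \<le> measure (sample_space q Pc L arm tau) {\<omega> \<in> space (sample_space q Pc L arm tau).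
         mu q Pc L k - \<delta> - \<epsilon> / 2 \<le> Yhat q Pc L K arm tau \<epsilon> k \<omega> \<and>
         Yhat q Pc L K arm tau \<epsilon> k \<omega> \<le> mu q Pc L k + \<delta>}"
proof -
  have "1 - 2 * exp (- 2 * \<delta>\<^sup>2 / (card {1..tau} * (2 * ln (2 / \<epsilon>) / Z)\<^sup>2))
    \<le> measure (\<Pi>\<^sub>M s\<in>{1..tau}. joint q (Pc (arm s)) L) {\<omega> \<in> space (\<Pi>\<^sub>M s\<in>{1..tau}. joint q (Pc (arm s)) L).
         mu q Pc L k - \<delta> - \<epsilon> / 2 \<le> (\<Sum>s\<in>{1..tau}. sample_term s (\<omega> s)) \<and>
         (\<Sum>s\<in>{1..tau}. sample_term s (\<omega> s)) \<le> mu q Pc L k + \<delta>}"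
  proof (rule Hoeffding_PiM_interval[where N = observation_space])
    show "AE x in joint q (Pc (arm s)) L. sample_term s x \<in> {0..2 * ln (2 / \<epsilon>) / Z}"
      if "s \<in> {1..tau}" for s
      using that by (rule AE_sample_term_range)
  qed (use samples_nonempty prob_space_joint sets_joint measurable_sample_term
        sum_integral_sample_term_bounds eps Zpos assms in auto)
  then show ?thesis
    unfolding sample_space_def Yhat_eq_sum_sample_term by simp
qed

end

theorem theorem4:
  fixes q :: "('p::finite) pmf"
    and Pc :: "nat \<Rightarrow> 'p \<Rightarrow> ('v::finite) pmf"
    and L :: "'p \<Rightarrow> 'v \<Rightarrow> real measure"
    and K k tau :: nat and arm :: "nat \<Rightarrow> nat" and \<epsilon> \<delta> :: real
  assumes L_prob: "\<And>p v. prob_space (L p v)"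
    and L_sets: "\<And>p v. sets (L p v) = sets borel"
    and L_range: "\<And>p v. AE y in L p v. 0 \<le> y \<and> y \<le> 1"
    and abs_cont: "\<And>i j p. i < K \<Longrightarrow> j < K \<Longrightarrow> p \<in> set_pmf q \<Longrightarrow>
                     set_pmf (Pc i p) = set_pmf (Pc j p)"
    and eps: "0 < \<epsilon>" "\<epsilon> \<le> 1"
    and k: "k < K"
    and arm: "\<And>s. s \<in> {1..tau} \<Longrightarrow> arm s < K"
    and Zpos: "Zk q Pc L K arm tau k > 0"
    and delta: "\<delta> > 0"
  shows "measure (sample_space q Pc L arm tau)
           {\<omega> \<in> space (sample_space q Pc L arm tau).
              mu q Pc L k - \<delta> - \<epsilon> / 2 \<le> Yhat q Pc L K arm tau \<epsilon> k \<omega> \<and>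
              Yhat q Pc L K arm tau \<epsilon> k \<omega> \<le> mu q Pc L k + \<delta>}
         \<ge> 1 - 2 * exp (- (\<delta>\<^sup>2 * real tau / (8 * (ln (2 / \<epsilon>))\<^sup>2))
                          * (Zk q Pc L K arm tau k / real tau)\<^sup>2)"
proof -
  interpret clipped_estimator L q Pc K k tau arm \<epsilon>
    by (intro clipped_estimator.intro bounded_outcome_kernel.intro clipped_estimator_axioms.intro)
       (fact assms)+
  \<comment> \<open>Hoeffding even gives the exponent with \<open>2\<close> in place of \<open>8\<close>.\<close>
  have "0 < ln (2 / \<epsilon>)" "0 < tau"
    using eps samples_nonempty by auto
  then have "- (\<delta>\<^sup>2 * tau / (8 * (ln (2 / \<epsilon>))\<^sup>2)) * (Z / tau)\<^sup>2
      \<ge> - 2 * \<delta>\<^sup>2 / (tau * (2 * ln (2 / \<epsilon>) / Z)\<^sup>2)"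
    using Zpos delta by (simp add: field_simps power2_eq_square)
  then have "exp (- 2 * \<delta>\<^sup>2 / (tau * (2 * ln (2 / \<epsilon>) / Z)\<^sup>2))
      \<le> exp (- (\<delta>\<^sup>2 * tau / (8 * (ln (2 / \<epsilon>))\<^sup>2)) * (Z / tau)\<^sup>2)"
    by (rule exp_mono)
  then show ?thesis
    using Yhat_concentration[OF delta] by linarith
qed

end
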